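(* In the setting described in the context, assume that $H$ has no separating $2$-cycles. Let $C$ be a $3$-cycle of $H$ with black vertices $x_1,x_2,x_3$, and let $e$ be the edge of $C$ joining $x_1$ and $x_3$. Suppose $e$ is a partnered edge of $H$ and let $e'$ be an edge of $H$ parallel to $e$. Let $P=x_1wx_3$ and $P'=x_1w'x_3$ be the $2$-paths of $F$ corresponding to $e$ and $e'$ respectively. Then one of $P,P'$ lies in $\mathrm{int}(C)$ and the other lies in $\mathrm{ext}(C)$ (meaning its red internal vertex and its two edges lie there).
   Context: Drawings: vertices are distinct points, edges are arcs; no edge crosses itself, no two edges cross more than once, no two edges with a common end cross; a drawing is $1$-planar if every edge is crossed at most once. Setting: $G$ is a simple bipartite $1$-planar graph with partite sets $X,Y$, $3\le|X|\le|Y|$, and $D$ is a $1$-planar drawing of $G$ with the minimum number of crossings among all $1$-planar drawings of $G$. $D^\times$ is the plane graph obtained from $D$ by turning every crossing into a new vertex of degree $4$ (a crossing vertex); $W$ is the set of crossing vertices. Vertices of $X$ are called black, of $Y$ white, of $W$ red. Each $w\in W$ is adjacent in $D^\times$ to exactly two black vertices $x_1,x_2$. For each $w\in W$ add a new edge $e_w$ joining $x_1,x_2$, drawn arbitrarily close to one side of the path $x_1wx_2$ so that it crosses no edge and the region between $e_w$ and $x_1wx_2$ contains no vertex or edge of $D^\times$; the resulting plane (possibly multi-)graph is $D^\times_W$. Let $F=D^\times_W[X\cup W]$ and $H=D^\times_W[X]$, so $E(H)=\{e_w:w\in W\}$; the path $x_1wx_2$ is the $2$-path of $F$ corresponding to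 $e_w$. For a cycle $C$ in the plane, $\mathrm{int}(C)$ and $\mathrm{ext}(C)$ denote the bounded and unbounded open regions of its complement. A $2$-cycle of $H$ consists of two parallel edges; it is separating if both $\mathrm{int}(C)$ and $\mathrm{ext}(C)$ contain at least one (black) vertex of $H$. An edge of $H$ is simple if no other edge of $H$ is parallel to it, and partnered otherwise. *)

theory Defs
  imports "HOL-Analysis.Analysis"
begin

text \<open>Graphs: a simple bipartite graph with partite sets X, Y is given by an edge set
  E \<subseteq> X \<times> Y (edge (x,y) joins the black vertex x and the white vertex y).\<close>

definition edge_int :: "(real \<Rightarrow> complex) \<Rightarrow> complex set" where
  "edge_int g = path_image g - {pathstart g, pathfinish g}"

definition at_most_one :: "'a set \<Rightarrow> bool" where
  "at_most_one S \<longleftrightarrow> (\<forall>a\<in>S. \<forall>b\<in>S. a = b)"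

definition drawing ::
  "'v set \<Rightarrow> 'v set \<Rightarrow> ('v \<times> 'v) set \<Rightarrow> ('v \<Rightarrow> complex) \<Rightarrow> ('v \<times> 'v \<Rightarrow> real \<Rightarrow> complex) \<Rightarrow> bool" where
  "drawing X Y E pos \<gamma> \<longleftrightarrow>
     inj_on pos (X \<union> Y) \<and>
     (\<forall>e\<in>E. arc (\<gamma> e) \<and> pathstart (\<gamma> e) = pos (fst e) \<and> pathfinish (\<gamma> e) = pos (snd e)) \<and>
     (\<forall>e\<in>E. \<forall>v\<in>X \<union> Y. pos v \<in> path_image (\<gamma> e) \<longrightarrow> v = fst e \<or> v = snd e) \<and>
     (\<forall>e\<in>E. \<forall>f\<in>E. e \<noteq> f \<longrightarrow> at_most_one (edge_int (\<gamma> e) \<inter> edge_int (\<gamma> f))) \<and>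
     (\<forall>e\<in>E. \<forall>f\<in>E. e \<noteq> f \<and> {fst e, snd e} \<inter> {fst f, snd f} \<noteq> {} \<longrightarrow>
         edge_int (\<gamma> e) \<inter> edge_int (\<gamma> f) = {})"

definition crossings_on ::
  "('v \<times> 'v) set \<Rightarrow> ('v \<times> 'v \<Rightarrow> real \<Rightarrow> complex) \<Rightarrow> 'v \<times> 'v \<Rightarrow> (('v \<times> 'v) \<times> complex) set" where
  "crossings_on E \<gamma> e = {(f, p). f \<in> E \<and> f \<noteq> e \<and> p \<in> edge_int (\<gamma> e) \<inter> edge_int (\<gamma> f)}"

definition one_planar_drawing ::
  "'v set \<Rightarrow> 'v set \<Rightarrow> ('v \<times> 'v) set \<Rightarrow> ('v \<Rightarrow> complex) \<Rightarrow> ('v \<times> 'v \<Rightarrow> real \<Rightarrow> complex) \<Rightarrow> bool" where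
  "one_planar_drawing X Y E pos \<gamma> \<longleftrightarrow>
     drawing X Y E pos \<gamma> \<and> (\<forall>e\<in>E. at_most_one (crossings_on E \<gamma> e))"

text \<open>The set W of crossing points (red vertices).  In a 1-planar drawing every
  crossing point lies on exactly two edges, so card W is the number of crossings.\<close>
definition crossing_points ::
  "('v \<times> 'v) set \<Rightarrow> ('v \<times> 'v \<Rightarrow> real \<Rightarrow> complex) \<Rightarrow> complex set" where
  "crossing_points E \<gamma> = {p. \<exists>e\<in>E. \<exists>f\<in>E. e \<noteq> f \<and> p \<in> edge_int (\<gamma> e) \<inter> edge_int (\<gamma> f)}"

definition min_crossing_one_planar_drawing ::
  "'v set \<Rightarrow> 'v set \<Rightarrow> ('v \<times> 'v) set \<Rightarrow> ('v \<Rightarrow> complex) \<Rightarrow> ('v \<times> 'v \<Rightarrow> real \<Rightarrow> complex) \<Rightarrow> bool" where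
  "min_crossing_one_planar_drawing X Y E pos \<gamma> \<longleftrightarrow>
     one_planar_drawing X Y E pos \<gamma> \<and>
     (\<forall>pos' \<gamma>'. one_planar_drawing X Y E pos' \<gamma>' \<longrightarrow>
         card (crossing_points E \<gamma>) \<le> card (crossing_points E \<gamma>'))"

definition blacks :: "('v \<times> 'v) set \<Rightarrow> ('v \<times> 'v \<Rightarrow> real \<Rightarrow> complex) \<Rightarrow> complex \<Rightarrow> 'v set" where
  "blacks E \<gamma> w = {fst e | e. e \<in> E \<and> w \<in> edge_int (\<gamma> e)}"

definition seg_to :: "(real \<Rightarrow> complex) \<Rightarrow> complex \<Rightarrow> complex set" where
  "seg_to g p = g ` {0 .. (SOME t. 0 \<le> t \<and> t \<le> 1 \<and> g t = p)}"

text \<open>Point set of the 2-path x1 w x2 of F (edges of D-times from the black ends to w).\<close>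
definition two_path :: "('v \<times> 'v) set \<Rightarrow> ('v \<times> 'v \<Rightarrow> real \<Rightarrow> complex) \<Rightarrow> complex \<Rightarrow> complex set" where
  "two_path E \<gamma> w = \<Union>{seg_to (\<gamma> e) w | e. e \<in> E \<and> w \<in> edge_int (\<gamma> e)}"

definition drawing_points ::
  "'v set \<Rightarrow> 'v set \<Rightarrow> ('v \<times> 'v) set \<Rightarrow> ('v \<Rightarrow> complex) \<Rightarrow> ('v \<times> 'v \<Rightarrow> real \<Rightarrow> complex) \<Rightarrow> complex set" where
  "drawing_points X Y E pos \<gamma> = pos ` (X \<union> Y) \<union> \<Union>((\<lambda>e. path_image (\<gamma> e)) ` E)"

text \<open>Admissible choice of the new edges e_w (given as arcs \<eta> w), w \<in> W:
  e_w joins the two black neighbours of w, crosses nothing, the e_w are pairwise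
  non-crossing, and the region between e_w and x1 w x2 (the bounded face of the
  closed curve they form) contains no point of D-times nor of any other e_w'.\<close>
definition aux_edges ::
  "'v set \<Rightarrow> 'v set \<Rightarrow> ('v \<times> 'v) set \<Rightarrow> ('v \<Rightarrow> complex) \<Rightarrow> ('v \<times> 'v \<Rightarrow> real \<Rightarrow> complex)
     \<Rightarrow> (complex \<Rightarrow> real \<Rightarrow> complex) \<Rightarrow> bool" where
  "aux_edges X Y E pos \<gamma> \<eta> \<longleftrightarrow>
    (\<forall>w\<in>crossing_points E \<gamma>.
       arc (\<eta> w) \<and>
       {pathstart (\<eta> w), pathfinish (\<eta> w)} = pos ` blacks E \<gamma> w \<and>
       edge_int (\<eta> w) \<inter> drawing_points X Y E pos \<gamma> = {} \<and>
       inside (path_image (\<eta> w) \<union> two_path E \<gamma> w) \<inter> drawing_points X Y E pos \<gamma> = {} \<and>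
       (\<forall>w'\<in>crossing_points E \<gamma>. w' \<noteq> w \<longrightarrow>
          edge_int (\<eta> w) \<inter> edge_int (\<eta> w') = {} \<and>
          inside (path_image (\<eta> w) \<union> two_path E \<gamma> w) \<inter> path_image (\<eta> w') = {}))"

definition no_separating_2cycle ::
  "'v set \<Rightarrow> ('v \<times> 'v) set \<Rightarrow> ('v \<Rightarrow> complex) \<Rightarrow> ('v \<times> 'v \<Rightarrow> real \<Rightarrow> complex)
     \<Rightarrow> (complex \<Rightarrow> real \<Rightarrow> complex) \<Rightarrow> bool" where
  "no_separating_2cycle X E pos \<gamma> \<eta> \<longleftrightarrow>
    (\<forall>w\<in>crossing_points E \<gamma>. \<forall>w'\<in>crossing_points E \<gamma>.
       w \<noteq> w' \<and> blacks E \<gamma> w = blacks E \<gamma> w' \<longrightarrow>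
       \<not> ((\<exists>x\<in>X. pos x \<in> inside (path_image (\<eta> w) \<union> path_image (\<eta> w'))) \<and>
          (\<exists>x\<in>X. pos x \<in> outside (path_image (\<eta> w) \<union> path_image (\<eta> w')))))"

end

theory Submission
  imports Defs
begin

text \<open>The auxiliary edges of w and w' and the path formed by the auxiliary edges of w1 and w2
  are three arcs from x1 to x3, a theta graph in the plane. The 2-path of w closes up with the
  auxiliary edge of w to a Jordan curve whose inside meets no other auxiliary edge, so w lies on
  the same side of the cycle formed by the other two arcs as the interior of its own auxiliary
  edge; likewise for w'. If the 2-paths of w and w' lay on the same side of C, a parity argument
  for the three cycles of the theta graph would put w and x2 on different sides of the 2-cycle
  formed by the auxiliary edges of w and w'. As H has no separating 2-cycle, the side containing
  w would contain no black vertex; then the white end y of the edge through w at x1 would have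
  only x1 and x3 as neighbours, and moving y onto the auxiliary edge of w would save the crossing
  w, contradicting minimality.\<close>

lemma path_image_eq_edge_int_ends: "path_image g = edge_int g \<union> {pathstart g, pathfinish g}"
  unfolding edge_int_def using pathstart_in_path_image pathfinish_in_path_image by blast

lemma edge_int_subpath:
  assumes "arc g" "s \<in> {0..1}" "t \<in> {0..1}"
  shows "edge_int (subpath s t g) = g ` ({min s t..max s t} - {s, t})"
proof -
  have "inj_on g {0..1}"
    using assms(1) by (simp add: arc_def)
  moreover have "{min s t..max s t} \<subseteq> {0..1}"
    using assms(2,3) by auto
  ultimately have "g ` ({min s t..max s t} - {s, t}) = g ` {min s t..max s t} - g ` {s, t}"
    using assms(2,3) by (intro inj_on_image_set_diff) auto
  then show ?thesis
    unfolding edge_int_def by (simp add: path_image_subpath min_def max_def)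
qed

lemma edge_int_arc: "arc g \<Longrightarrow> edge_int g = g ` ({0..1} - {0, 1})"
  using edge_int_subpath[of g 0 1] by simp

lemma arc_reorient:
  assumes "arc g" "{pathstart g, pathfinish g} = {a, b}"
  obtains h where "arc h" "pathstart h = a" "pathfinish h = b" "path_image h = path_image g"
proof (cases "pathstart g = a")
  case True
  then have "pathfinish g = b"
    using assms arc_distinct_ends[OF assms(1)] by (metis doubleton_eq_iff)
  then show ?thesis
    using that[of g] assms(1) True by blast
next
  case False
  then have "pathstart g = b" "pathfinish g = a"
    using assms(2) by (metis doubleton_eq_iff)+
  then show ?thesis
    using that[of "reversepath g"] assms(1) by (simp add: arc_reversepath)
qed

lemma connected_arc_image_Diff_start:
  assumes "arc g"
  shows "connected (path_image g - {pathstart g})"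
proof -
  have "inj_on g {0..1}"
    using assms by (simp add: arc_def)
  then have "path_image g - {pathstart g} = g ` ({0..1} - {0})"
    unfolding path_image_def pathstart_def by (subst inj_on_image_set_diff) auto
  also have "\<dots> = g ` {0<..1}"
    by (rule arg_cong[where f = "image g"]) auto
  finally have "path_image g - {pathstart g} = g ` {0<..1}" .
  moreover have "continuous_on {0<..1} g"
    using arc_imp_path[OF assms] unfolding path_def by (rule continuous_on_subset) auto
  ultimately show ?thesis
    by (simp add: connected_continuous_image)
qed

lemma arc_halves:
  assumes "arc g"
  obtains r h1 h2 where "r \<in> edge_int g"
    and "arc h1" "pathstart h1 = pathstart g" "pathfinish h1 = r"
    and "arc h2" "pathstart h2 = pathfinish g" "pathfinish h2 = r"
    and "edge_int h1 \<union> edge_int h2 \<subseteq> edge_int g" "edge_int h1 \<inter> edge_int h2 = {}"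
proof -
  have inj: "inj_on g {0..1}"
    using assms by (simp add: arc_def)
  have "{0..1/2} - {0, 1/2} = {0<..<1/2::real}" "{1/2..1} - {1, 1/2} = {1/2<..<1::real}"
    "{0..1} - {0, 1} = {0<..<1::real}"
    by auto
  then have "edge_int (subpath 0 (1/2) g) = g ` {0<..<1/2}"
    "edge_int (subpath 1 (1/2) g) = g ` {1/2<..<1}" "edge_int g = g ` {0<..<1}"
    using edge_int_subpath[OF assms, of 0 "1/2"] edge_int_subpath[OF assms, of 1 "1/2"]
      edge_int_arc[OF assms] by simp_all
  moreover have "g ` {0<..<1/2} \<inter> g ` {1/2<..<1} = {}"
  proof -
    have "{0<..<1/2} \<inter> {1/2<..<1} = ({} :: real set)"
      by auto
    then show ?thesis
      using inj_on_image_Int[OF inj, of "{0<..<1/2}" "{1/2<..<1}"] by (simp add: subset_iff)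
  qed
  moreover have "g ` {0<..<1/2} \<union> g ` {1/2<..<1} \<subseteq> g ` {0<..<1}" "g (1/2) \<in> g ` {0<..<1}"
    by auto
  moreover have "arc (subpath 0 (1/2) g)" "arc (subpath 1 (1/2) g)"
    using arc_subpath_arc[OF assms] by simp_all
  moreover have "pathstart (subpath 0 (1/2) g) = pathstart g" "pathstart (subpath 1 (1/2) g) = pathfinish g"
    by (simp_all add: pathstart_def pathfinish_def subpath_def)
  ultimately show ?thesis
    using that[of "g (1/2)" "subpath 0 (1/2) g" "subpath 1 (1/2) g"] by simp
qed

lemma seg_to_subset:
  assumes "p \<in> path_image g"
  shows "seg_to g p \<subseteq> path_image g"
proof -
  have "\<exists>t. 0 \<le> t \<and> t \<le> 1 \<and> g t = p"
    using assms unfolding path_image_def by auto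
  then have "(SOME t. 0 \<le> t \<and> t \<le> 1 \<and> g t = p) \<le> 1"
    by (rule someI2_ex) simp
  then show ?thesis
    unfolding seg_to_def path_image_def by auto
qed

lemma seg_to_arc:
  assumes "arc g" "p \<in> edge_int g"
  obtains h where "arc h" "pathstart h = pathstart g" "pathfinish h = p" "path_image h = seg_to g p"
    and "seg_to g p \<subseteq> edge_int g \<union> {pathstart g}"
proof -
  define t where "t = (SOME t. 0 \<le> t \<and> t \<le> 1 \<and> g t = p)"
  have "\<exists>t. 0 \<le> t \<and> t \<le> 1 \<and> g t = p"
    using assms(2) unfolding edge_int_def path_image_def by auto
  then have t: "0 \<le> t" "t \<le> 1" "g t = p"
    unfolding t_def by (metis (mono_tags, lifting) someI_ex)+
  have "t \<noteq> 0" "t \<noteq> 1"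
    using assms(2) t(3) unfolding edge_int_def pathstart_def pathfinish_def by auto
  have "seg_to g p = path_image (subpath 0 t g)"
    unfolding seg_to_def t_def[symmetric] using t by (simp add: path_image_subpath)
  moreover have "arc (subpath 0 t g)"
    using arc_subpath_arc[OF assms(1)] t \<open>t \<noteq> 0\<close> by simp
  moreover have "seg_to g p \<subseteq> edge_int g \<union> {pathstart g}"
    unfolding seg_to_def t_def[symmetric] edge_int_arc[OF assms(1)] using t \<open>t \<noteq> 1\<close>
    by (auto simp: pathstart_def)
  moreover have "pathstart (subpath 0 t g) = pathstart g"
    by (simp add: pathstart_def subpath_def)
  ultimately show ?thesis
    using that[of "subpath 0 t g"] t(3) by simp
qed

section \<open>Jordan curves\<close>

definition jordan_curve :: "complex set \<Rightarrow> bool" where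
  "jordan_curve J \<longleftrightarrow> (\<exists>g. simple_path g \<and> pathfinish g = pathstart g \<and> path_image g = J)"

lemma jordan_curve_arcs:
  assumes "arc g1" "arc g2" "pathstart g2 = pathstart g1" "pathfinish g2 = pathfinish g1"
    and "path_image g1 \<inter> path_image g2 \<subseteq> {pathstart g1, pathfinish g1}"
  shows "jordan_curve (path_image g1 \<union> path_image g2)"
  unfolding jordan_curve_def
proof (intro exI conjI)
  show "simple_path (g1 +++ reversepath g2)"
    using assms by (simp add: simple_path_join_loop_eq arc_reversepath)
qed (use assms in \<open>auto simp: path_image_join\<close>)

lemma jordan_curve_inside_outside:
  assumes "jordan_curve J"
  shows "open (inside J)" "connected (inside J)" "inside J \<noteq> {}" "bounded (inside J)"
    and "open (outside J)" "connected (outside J)"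
    and "closure (inside J) = inside J \<union> J" "closure (outside J) = outside J \<union> J"
    and "- closure (inside J) = outside J" "compact J"
proof -
  obtain g where g: "simple_path g" "pathfinish g = pathstart g" "path_image g = J"
    using assms unfolding jordan_curve_def by blast
  note Jordan = Jordan_inside_outside[OF g(1,2), unfolded g(3)]
  show "open (inside J)" "connected (inside J)" "inside J \<noteq> {}" "bounded (inside J)"
    "open (outside J)" "connected (outside J)"
    using Jordan by auto
  show "closure (inside J) = inside J \<union> J" "closure (outside J) = outside J \<union> J"
    using Jordan by (simp_all add: closure_Un_frontier)
  then show "- closure (inside J) = outside J"
    unfolding outside_inside by blast
  show "compact J"
    using compact_simple_path_image[OF g(1)] g(3) by simp
qed

lemma connected_subset_inside_or_outside:
  assumes "jordan_curve J" "connected P" "P \<inter> J = {}"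
  shows "P \<subseteq> inside J \<or> P \<subseteq> outside J"
proof -
  have "inside J \<inter> P = {} \<or> outside J \<inter> P = {}"
    using connectedD[OF assms(2)] jordan_curve_inside_outside(1,5)[OF assms(1)]
      inside_Int_outside[of J] inside_Un_outside[of J] assms(3) by blast
  then show ?thesis
    using assms(3) inside_Un_outside[of J] by blast
qed

lemma connected_subset_side:
  assumes "jordan_curve J" "connected P" "P \<inter> J = {}"
    and "K = inside J \<or> K = outside J" "z \<in> P" "z \<in> K"
  shows "P \<subseteq> K"
  using connected_subset_inside_or_outside[OF assms(1-3)] assms(4-6) inside_Int_outside[of J] by blast

text \<open>The interior of J, which misses K, lies on one side of K; since J is contained in the
  closure of its interior, so do all points of J off K.\<close>
lemma jordan_curve_Diff_one_side:
  assumes "jordan_curve J" "jordan_curve K" "inside J \<inter> K = {}"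
  shows "J - K \<subseteq> inside K \<or> J - K \<subseteq> outside K"
proof -
  note J = jordan_curve_inside_outside[OF assms(1)] and K = jordan_curve_inside_outside[OF assms(2)]
  have "inside J \<subseteq> inside K \<or> inside J \<subseteq> outside K"
    by (rule connected_subset_inside_or_outside[OF assms(2) J(2) assms(3)])
  then have "closure (inside J) \<subseteq> inside K \<union> K \<or> closure (inside J) \<subseteq> outside K \<union> K"
    using closure_mono K(7,8) by metis
  then show ?thesis
    using J(7) by blast
qed

lemma jordan_curves_inside_disjoint:
  assumes GH: "jordan_curve (G \<union> H)" and GK: "jordan_curve (G \<union> K)"
    and "K \<inter> inside (G \<union> H) = {}" "H \<inter> inside (G \<union> K) = {}" "\<not> H \<subseteq> G \<union> K"
  shows "inside (G \<union> H) \<inter> inside (G \<union> K) = {}"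
proof -
  have "inside (G \<union> H) \<subseteq> inside (G \<union> K) \<or> inside (G \<union> H) \<subseteq> outside (G \<union> K)"
    by (rule connected_subset_inside_or_outside[OF GK jordan_curve_inside_outside(2)[OF GH]])
      (use assms(3) inside_no_overlap[of "G \<union> H"] in blast)
  moreover have "inside (G \<union> K) \<subseteq> inside (G \<union> H) \<or> inside (G \<union> K) \<subseteq> outside (G \<union> H)"
    by (rule connected_subset_inside_or_outside[OF GH jordan_curve_inside_outside(2)[OF GK]])
      (use assms(4) inside_no_overlap[of "G \<union> K"] in blast)
  moreover have "inside (G \<union> H) \<noteq> inside (G \<union> K)"
  proof
    assume eq: "inside (G \<union> H) = inside (G \<union> K)"
    then have "closure (inside (G \<union> H)) = closure (inside (G \<union> K))"
      by simp
    then have "inside (G \<union> H) \<union> (G \<union> H) = inside (G \<union> K) \<union> (G \<union> K)"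
      using jordan_curve_inside_outside(7)[OF GH] jordan_curve_inside_outside(7)[OF GK] by simp
    then show False
      using eq assms(5) inside_no_overlap[of "G \<union> H"] by blast
  qed
  ultimately show ?thesis
    using inside_Int_outside[of "G \<union> H"] inside_Int_outside[of "G \<union> K"] by blast
qed

section \<open>Theta graphs\<close>

locale theta =
  fixes a b :: complex and c1 c2 c3 :: "real \<Rightarrow> complex"
  assumes arc: "arc c1" "arc c2" "arc c3"
    and start: "pathstart c1 = a" "pathstart c2 = a" "pathstart c3 = a"
    and finish: "pathfinish c1 = b" "pathfinish c2 = b" "pathfinish c3 = b"
    and meet: "path_image c1 \<inter> path_image c2 = {a, b}" "path_image c1 \<inter> path_image c3 = {a, b}"
      "path_image c2 \<inter> path_image c3 = {a, b}"
begin

abbreviation "T1 \<equiv> path_image c1"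
abbreviation "T2 \<equiv> path_image c2"
abbreviation "T3 \<equiv> path_image c3"

lemma theta_swap:
  shows theta_swap12: "theta a b c2 c1 c3" and theta_swap23: "theta a b c1 c3 c2"
  using arc start finish meet by unfold_locales (auto simp: Int_commute)

lemma jordan_curve_cycles:
  shows "jordan_curve (T1 \<union> T2)" "jordan_curve (T1 \<union> T3)" "jordan_curve (T2 \<union> T3)"
  by (rule jordan_curve_arcs; use arc start finish meet in auto)+

lemma arc_interior_nonempty:
  obtains p1 p2 p3 where "p1 \<in> T1 - {a, b}" "p2 \<in> T2 - {a, b}" "p3 \<in> T3 - {a, b}"
proof -
  have "path_image c - {a, b} \<noteq> {}" if "arc c" "pathstart c = a" "pathfinish c = b" for c
    using nonempty_simple_path_endless[OF arc_imp_simple_path[OF that(1)]] that(2,3) by simp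
  then show ?thesis
    using that arc start finish by blast
qed

lemma insides_disjoint_if_no_middle_arc:
  assumes "T3 \<inter> inside (T1 \<union> T2) = {}" "T2 \<inter> inside (T1 \<union> T3) = {}" "T1 \<inter> inside (T2 \<union> T3) = {}"
  shows "inside (T1 \<union> T2) \<inter> inside (T1 \<union> T3) = {}" "inside (T1 \<union> T2) \<inter> inside (T2 \<union> T3) = {}"
    and "inside (T2 \<union> T3) \<inter> inside (T1 \<union> T3) = {}"
proof -
  note J12 = jordan_curve_cycles(1) and J13 = jordan_curve_cycles(2) and J23 = jordan_curve_cycles(3)
  obtain p1 p2 where "p1 \<in> T1 - {a, b}" "p2 \<in> T2 - {a, b}"
    using arc_interior_nonempty by blast
  then have outside_others: "\<not> T1 \<subseteq> T2 \<union> T3" "\<not> T2 \<subseteq> T1 \<union> T3"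
    using meet by blast+
  show "inside (T1 \<union> T2) \<inter> inside (T1 \<union> T3) = {}"
    by (rule jordan_curves_inside_disjoint[OF J12 J13]) (use assms outside_others in simp_all)
  show "inside (T1 \<union> T2) \<inter> inside (T2 \<union> T3) = {}"
    using jordan_curves_inside_disjoint[of T2 T1 T3] J12 J23 assms outside_others
    by (simp add: Un_commute)
  show "inside (T2 \<union> T3) \<inter> inside (T1 \<union> T3) = {}"
    using jordan_curves_inside_disjoint[of T3 T2 T1] J13 J23 assms outside_others
    by (simp add: Un_commute)
qed

text \<open>Kuratowski's argument: otherwise the three insides would be disjoint, and Janiszewski's
  theorem would show that the complement of the closures of two of them is connected; it
  contains both the third inside and far-away points of the outside of the third cycle.\<close>
lemma middle_arc_exists:
  "T3 \<inter> inside (T1 \<union> T2) \<noteq> {} \<or> T2 \<inter> inside (T1 \<union> T3) \<noteq> {} \<or> T1 \<inter> inside (T2 \<union> T3) \<noteq> {}"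
proof (rule ccontr)
  define U1 U2 U3 where "U1 = inside (T2 \<union> T3)" and "U2 = inside (T1 \<union> T3)"
    and "U3 = inside (T1 \<union> T2)"
  assume "\<not> ?thesis"
  then have no_middle: "T3 \<inter> U3 = {}" "T2 \<inter> U2 = {}" "T1 \<inter> U1 = {}"
    unfolding U1_def U2_def U3_def by blast+
  note disjoint = insides_disjoint_if_no_middle_arc[OF no_middle[unfolded U1_def U2_def U3_def],
      folded U1_def U2_def U3_def]
  note J12 = jordan_curve_cycles(1) and J13 = jordan_curve_cycles(2) and J23 = jordan_curve_cycles(3)
  have cl: "closure U1 = U1 \<union> T2 \<union> T3" "closure U2 = U2 \<union> T1 \<union> T3"
    using jordan_curve_inside_outside(7)[OF J23] jordan_curve_inside_outside(7)[OF J13]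
    unfolding U1_def U2_def by (simp_all add: Un_assoc)
  have "U3 \<inter> (T1 \<union> T2) = {}"
    unfolding U3_def by (rule inside_no_overlap)
  then have U3_sub: "U3 \<subseteq> - (closure U1 \<union> closure U2)"
    unfolding cl using disjoint(1,2) no_middle(1) by blast
  have "U1 \<inter> T3 = {}" "U2 \<inter> T3 = {}" "T1 \<inter> T2 \<subseteq> T3"
    using inside_no_overlap[of "T2 \<union> T3"] inside_no_overlap[of "T1 \<union> T3"] meet
    unfolding U1_def U2_def by blast+
  then have "closure U1 \<inter> closure U2 = T3"
    using disjoint(3) no_middle(2,3) unfolding cl by blast
  then have S_connected: "connected (- (closure U1 \<union> closure U2))"
    using jordan_curve_inside_outside(4,6,9)[OF J23] jordan_curve_inside_outside(6,9)[OF J13]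
      connected_path_image[OF arc_imp_path[OF arc(3)]]
    unfolding U1_def U2_def by (intro Janiszewski_connected) (simp_all add: compact_closure)
  have "- (closure U1 \<union> closure U2) \<subseteq> U3 \<or> - (closure U1 \<union> closure U2) \<subseteq> outside (T1 \<union> T2)"
    by (rule connected_subset_inside_or_outside[OF J12 S_connected, folded U3_def]) (use cl in auto)
  moreover have "U3 \<noteq> {}"
    using jordan_curve_inside_outside(3)[OF J12] unfolding U3_def .
  ultimately have S_sub: "- (closure U1 \<union> closure U2) \<subseteq> U3"
    using U3_sub inside_Int_outside[of "T1 \<union> T2"] unfolding U3_def by blast
  have "bounded (closure U1 \<union> closure U2)"
    using jordan_curve_inside_outside(4)[OF J23] jordan_curve_inside_outside(4)[OF J13]
    unfolding U1_def U2_def by (simp add: bounded_closure)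
  moreover have "\<not> bounded (outside (T1 \<union> T2))"
    using unbounded_outside compact_imp_bounded jordan_curve_inside_outside(10)[OF J12] by blast
  ultimately obtain z where "z \<in> outside (T1 \<union> T2)" "z \<notin> closure U1 \<union> closure U2"
    using bounded_subset by blast
  then show False
    using S_sub inside_Int_outside[of "T1 \<union> T2"] unfolding U3_def by blast
qed

lemma sides_if_middle:
  assumes "T3 \<inter> inside (T1 \<union> T2) \<noteq> {}"
  shows "z \<notin> T1 \<union> T2 \<union> T3 \<Longrightarrow>
      z \<in> inside (T1 \<union> T2) \<longleftrightarrow> (z \<in> inside (T1 \<union> T3) \<longleftrightarrow> z \<notin> inside (T2 \<union> T3))"
    and "p1 \<in> T1 - {a, b} \<Longrightarrow> p2 \<in> T2 - {a, b} \<Longrightarrow> p3 \<in> T3 - {a, b} \<Longrightarrow>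
      p3 \<in> inside (T1 \<union> T2) \<longleftrightarrow> (p2 \<in> inside (T1 \<union> T3) \<longleftrightarrow> p1 \<in> inside (T2 \<union> T3))"
proof -
  have "a \<noteq> b"
    using arc_distinct_ends[OF arc(1)] start finish by simp
  then obtain disj: "inside (T1 \<union> T3) \<inter> inside (T2 \<union> T3) = {}"
    and split: "inside (T1 \<union> T3) \<union> inside (T2 \<union> T3) \<union> (T3 - {a, b}) = inside (T1 \<union> T2)"
    using split_inside_simple_closed_curve[of c1 a b c2 c3] arc start finish meet assms
    by (auto simp: arc_imp_simple_path)
  have "inside (T1 \<union> T2) \<inter> (T1 \<union> T2) = {}"
    by (rule inside_no_overlap)
  with disj split
  show "z \<notin> T1 \<union> T2 \<union> T3 \<Longrightarrow>
      z \<in> inside (T1 \<union> T2) \<longleftrightarrow> (z \<in> inside (T1 \<union> T3) \<longleftrightarrow> z \<notin> inside (T2 \<union> T3))"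
    and "p1 \<in> T1 - {a, b} \<Longrightarrow> p2 \<in> T2 - {a, b} \<Longrightarrow> p3 \<in> T3 - {a, b} \<Longrightarrow>
      p3 \<in> inside (T1 \<union> T2) \<longleftrightarrow> (p2 \<in> inside (T1 \<union> T3) \<longleftrightarrow> p1 \<in> inside (T2 \<union> T3))"
    by blast+
qed

lemma inside_cycles_even:
  assumes "z \<notin> T1 \<union> T2 \<union> T3"
  shows "z \<in> inside (T1 \<union> T2) \<longleftrightarrow> (z \<in> inside (T1 \<union> T3) \<longleftrightarrow> z \<notin> inside (T2 \<union> T3))"
  using middle_arc_exists
proof (elim disjE)
  assume "T3 \<inter> inside (T1 \<union> T2) \<noteq> {}"
  then show ?thesis
    using sides_if_middle(1) assms by blast
next
  assume middle: "T2 \<inter> inside (T1 \<union> T3) \<noteq> {}"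
  interpret t: theta a b c1 c3 c2
    by (rule theta_swap23)
  show ?thesis
    using middle t.sides_if_middle(1)[of z] assms by (auto simp: Un_commute)
next
  assume middle: "T1 \<inter> inside (T2 \<union> T3) \<noteq> {}"
  interpret t: theta a b c2 c3 c1
    by (rule theta.theta_swap23[OF theta_swap12])
  show ?thesis
    using middle t.sides_if_middle(1)[of z] assms by (auto simp: Un_commute)
qed

lemma arc_points_inside_odd:
  assumes "p1 \<in> T1 - {a, b}" "p2 \<in> T2 - {a, b}" "p3 \<in> T3 - {a, b}"
  shows "p3 \<in> inside (T1 \<union> T2) \<longleftrightarrow> (p2 \<in> inside (T1 \<union> T3) \<longleftrightarrow> p1 \<in> inside (T2 \<union> T3))"
  using middle_arc_exists
proof (elim disjE)
  assume "T3 \<inter> inside (T1 \<union> T2) \<noteq> {}"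
  then show ?thesis
    using sides_if_middle(2) assms by blast
next
  assume middle: "T2 \<inter> inside (T1 \<union> T3) \<noteq> {}"
  interpret t: theta a b c1 c3 c2
    by (rule theta_swap23)
  show ?thesis
    using middle t.sides_if_middle(2)[of p1 p3 p2] assms by (auto simp: Un_commute)
next
  assume middle: "T1 \<inter> inside (T2 \<union> T3) \<noteq> {}"
  interpret t: theta a b c2 c3 c1
    by (rule theta.theta_swap23[OF theta_swap12])
  show ?thesis
    using middle t.sides_if_middle(2)[of p2 p3 p1] assms by (auto simp: Un_commute)
qed

lemma opposite_side_of_cycle12:
  assumes "z \<notin> T1 \<union> T2 \<union> T3" "p1 \<in> T1 - {a, b}" "p2 \<in> T2 - {a, b}" "p3 \<in> T3 - {a, b}"
    and "z \<in> inside (T2 \<union> T3) \<longleftrightarrow> p1 \<in> inside (T2 \<union> T3)"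
    and "z \<in> inside (T1 \<union> T3) \<longleftrightarrow> p2 \<in> inside (T1 \<union> T3)"
  shows "z \<in> inside (T1 \<union> T2) \<longleftrightarrow> p3 \<notin> inside (T1 \<union> T2)"
  using inside_cycles_even[OF assms(1)] arc_points_inside_odd[OF assms(2-4)] assms(5,6) by blast

end

lemma one_planar_drawingD:
  assumes "one_planar_drawing X Y E pos \<gamma>"
  shows "inj_on pos (X \<union> Y)"
    and "e \<in> E \<Longrightarrow> arc (\<gamma> e)"
    and "e \<in> E \<Longrightarrow> pathstart (\<gamma> e) = pos (fst e)"
    and "e \<in> E \<Longrightarrow> pathfinish (\<gamma> e) = pos (snd e)"
    and "e \<in> E \<Longrightarrow> v \<in> X \<union> Y \<Longrightarrow> pos v \<in> path_image (\<gamma> e) \<Longrightarrow> v = fst e \<or> v = snd e"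
    and "e \<in> E \<Longrightarrow> f \<in> E \<Longrightarrow> e \<noteq> f \<Longrightarrow> at_most_one (edge_int (\<gamma> e) \<inter> edge_int (\<gamma> f))"
    and "e \<in> E \<Longrightarrow> f \<in> E \<Longrightarrow> e \<noteq> f \<Longrightarrow> {fst e, snd e} \<inter> {fst f, snd f} \<noteq> {} \<Longrightarrow>
      edge_int (\<gamma> e) \<inter> edge_int (\<gamma> f) = {}"
    and "e \<in> E \<Longrightarrow> at_most_one (crossings_on E \<gamma> e)"
proof -
  obtain "inj_on pos (X \<union> Y)"
    and "\<forall>e\<in>E. arc (\<gamma> e) \<and> pathstart (\<gamma> e) = pos (fst e) \<and> pathfinish (\<gamma> e) = pos (snd e)"
    and "\<forall>e\<in>E. \<forall>v\<in>X \<union> Y. pos v \<in> path_image (\<gamma> e) \<longrightarrow> v = fst e \<or> v = snd e"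
    and "\<forall>e\<in>E. \<forall>f\<in>E. e \<noteq> f \<longrightarrow> at_most_one (edge_int (\<gamma> e) \<inter> edge_int (\<gamma> f))"
    and "\<forall>e\<in>E. \<forall>f\<in>E. e \<noteq> f \<and> {fst e, snd e} \<inter> {fst f, snd f} \<noteq> {} \<longrightarrow>
      edge_int (\<gamma> e) \<inter> edge_int (\<gamma> f) = {}"
    and "\<forall>e\<in>E. at_most_one (crossings_on E \<gamma> e)"
    using assms unfolding one_planar_drawing_def drawing_def by (elim conjE)
  then show "inj_on pos (X \<union> Y)"
    and "e \<in> E \<Longrightarrow> arc (\<gamma> e)"
    and "e \<in> E \<Longrightarrow> pathstart (\<gamma> e) = pos (fst e)"
    and "e \<in> E \<Longrightarrow> pathfinish (\<gamma> e) = pos (snd e)"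
    and "e \<in> E \<Longrightarrow> v \<in> X \<union> Y \<Longrightarrow> pos v \<in> path_image (\<gamma> e) \<Longrightarrow> v = fst e \<or> v = snd e"
    and "e \<in> E \<Longrightarrow> f \<in> E \<Longrightarrow> e \<noteq> f \<Longrightarrow> at_most_one (edge_int (\<gamma> e) \<inter> edge_int (\<gamma> f))"
    and "e \<in> E \<Longrightarrow> f \<in> E \<Longrightarrow> e \<noteq> f \<Longrightarrow> {fst e, snd e} \<inter> {fst f, snd f} \<noteq> {} \<Longrightarrow>
      edge_int (\<gamma> e) \<inter> edge_int (\<gamma> f) = {}"
    and "e \<in> E \<Longrightarrow> at_most_one (crossings_on E \<gamma> e)"
    by simp_all
qed

lemma at_most_one_finite:
  assumes "at_most_one S"
  shows "finite S"
proof (cases "S = {}")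
  case False
  then obtain a where "a \<in> S"
    by blast
  with assms have "S \<subseteq> {a}"
    unfolding at_most_one_def by blast
  then show ?thesis
    using finite_subset by blast
qed simp

lemma at_most_one_subset: "at_most_one S \<Longrightarrow> T \<subseteq> S \<Longrightarrow> at_most_one T"
  unfolding at_most_one_def by blast

lemma finite_crossing_points:
  assumes "finite E" "one_planar_drawing X Y E pos \<gamma>"
  shows "finite (crossing_points E \<gamma>)"
proof -
  have eq: "crossing_points E \<gamma> = (\<Union>e\<in>E. \<Union>f\<in>E - {e}. edge_int (\<gamma> e) \<inter> edge_int (\<gamma> f))"
    unfolding crossing_points_def by blast
  have "finite (edge_int (\<gamma> e) \<inter> edge_int (\<gamma> f))" if "e \<in> E" "f \<in> E - {e}" for e f
    using at_most_one_finite one_planar_drawingD(6)[OF assms(2)] that by blast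
  then show ?thesis
    unfolding eq using assms(1) by (intro finite_UN_I) auto
qed

lemma crossing_edge_unique:
  assumes "one_planar_drawing X Y E pos \<gamma>" "e \<in> E" "f \<in> E" "g \<in> E" "f \<noteq> e" "g \<noteq> e"
    and "u \<in> edge_int (\<gamma> e) \<inter> edge_int (\<gamma> f)" "u \<in> edge_int (\<gamma> g)"
  shows "f = g"
proof -
  have "(f, u) \<in> crossings_on E \<gamma> e" "(g, u) \<in> crossings_on E \<gamma> e"
    using assms unfolding crossings_on_def by auto
  then show ?thesis
    using one_planar_drawingD(8)[OF assms(1,2)] unfolding at_most_one_def by blast
qed

lemma vertex_notin_edge_int:
  assumes "one_planar_drawing X Y E pos \<gamma>" "e \<in> E" "v \<in> X \<union> Y"
  shows "pos v \<notin> edge_int (\<gamma> e)"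
  using one_planar_drawingD(3-5)[OF assms(1,2)] assms(3) unfolding edge_int_def by auto

lemma black_vertex_on_edge:
  assumes "one_planar_drawing X Y E pos \<gamma>" "E \<subseteq> X \<times> Y" "X \<inter> Y = {}"
    and "e \<in> E" "v \<in> X" "pos v \<in> path_image (\<gamma> e)"
  shows "v = fst e"
proof -
  have "snd e \<in> Y"
    using assms(2,4) by auto
  then show ?thesis
    using one_planar_drawingD(5)[OF assms(1,4) _ assms(6)] assms(3,5) by blast
qed

lemma blacks_subset: "E \<subseteq> X \<times> Y \<Longrightarrow> blacks E \<gamma> w \<subseteq> X"
  unfolding blacks_def by auto

lemma crossing_edges:
  assumes "one_planar_drawing X Y E pos \<gamma>" "u \<in> crossing_points E \<gamma>"
    and "blacks E \<gamma> u = {x1, x3}" "x1 \<noteq> x3"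
  obtains e1 e3 where "e1 \<in> E" "e3 \<in> E" "fst e1 = x1" "fst e3 = x3"
    "u \<in> edge_int (\<gamma> e1)" "u \<in> edge_int (\<gamma> e3)"
    "\<And>e. e \<in> E \<Longrightarrow> u \<in> edge_int (\<gamma> e) \<Longrightarrow> e = e1 \<or> e = e3"
proof -
  have "x1 \<in> blacks E \<gamma> u" "x3 \<in> blacks E \<gamma> u"
    using assms(3) by auto
  then obtain e1 e3 where e: "e1 \<in> E" "u \<in> edge_int (\<gamma> e1)" "fst e1 = x1"
    "e3 \<in> E" "u \<in> edge_int (\<gamma> e3)" "fst e3 = x3"
    unfolding blacks_def by blast
  have "e = e1 \<or> e = e3" if "e \<in> E" "u \<in> edge_int (\<gamma> e)" for e
    using crossing_edge_unique[OF assms(1) e(1,4) that(1)] e that assms(4) by auto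
  with e that show ?thesis
    by blast
qed

lemma crossing_point_not_vertex:
  assumes "one_planar_drawing X Y E pos \<gamma>" "u \<in> crossing_points E \<gamma>" "v \<in> X \<union> Y"
  shows "u \<noteq> pos v"
proof -
  obtain e where "e \<in> E" "u \<in> edge_int (\<gamma> e)"
    using assms(2) unfolding crossing_points_def by blast
  then show ?thesis
    using vertex_notin_edge_int[OF assms(1) _ assms(3)] by blast
qed

lemma two_path_subset_drawing_points: "two_path E \<gamma> u \<subseteq> drawing_points X Y E pos \<gamma>"
  unfolding two_path_def drawing_points_def edge_int_def using seg_to_subset by blast

lemma crossing_in_two_path:
  assumes "u \<in> crossing_points E \<gamma>"
  shows "u \<in> two_path E \<gamma> u"
proof -
  obtain e where e: "e \<in> E" "u \<in> edge_int (\<gamma> e)"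
    using assms unfolding crossing_points_def by blast
  then have "\<exists>t. 0 \<le> t \<and> t \<le> 1 \<and> \<gamma> e t = u"
    unfolding edge_int_def path_image_def by auto
  then have "u \<in> seg_to (\<gamma> e) u"
    unfolding seg_to_def by (rule someI2_ex) auto
  then show ?thesis
    using e unfolding two_path_def by blast
qed

lemma vertex_on_two_path:
  assumes op: "one_planar_drawing X Y E pos \<gamma>" and "v \<in> X \<union> Y" "pos v \<in> two_path E \<gamma> u"
  shows "v \<in> blacks E \<gamma> u"
proof -
  obtain e where e: "e \<in> E" "u \<in> edge_int (\<gamma> e)" "pos v \<in> seg_to (\<gamma> e) u"
    using assms(3) unfolding two_path_def by blast
  note arc = one_planar_drawingD(2)[OF op e(1)]
  have "pos v \<notin> edge_int (\<gamma> e)"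
    by (rule vertex_notin_edge_int[OF op e(1) assms(2)])
  moreover obtain "seg_to (\<gamma> e) u \<subseteq> edge_int (\<gamma> e) \<union> {pathstart (\<gamma> e)}"
    using seg_to_arc[OF arc e(2)] by blast
  ultimately have "pos v = pathstart (\<gamma> e)"
    using e(3) by blast
  then have "pos v = pos (fst e)"
    using one_planar_drawingD(3)[OF op e(1)] by simp
  moreover have "pos (fst e) \<noteq> pos (snd e)"
    using arc_distinct_ends[OF arc] one_planar_drawingD(3,4)[OF op e(1)] by simp
  moreover have "pos v \<in> path_image (\<gamma> e)"
    using e(3) seg_to_subset[of u "\<gamma> e"] e(2) unfolding edge_int_def by blast
  ultimately have "v = fst e"
    using one_planar_drawingD(5)[OF op e(1) assms(2)] by auto
  then show ?thesis
    using e unfolding blacks_def by blast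
qed

lemma two_path_arc:
  assumes op: "one_planar_drawing X Y E pos \<gamma>" and "E \<subseteq> X \<times> Y" "X \<inter> Y = {}"
    and u: "u \<in> crossing_points E \<gamma>" "blacks E \<gamma> u = {x1, x3}" "x1 \<noteq> x3"
  obtains p where "arc p" "pathstart p = pos x1" "pathfinish p = pos x3" "path_image p = two_path E \<gamma> u"
proof -
  obtain e1 e3 where e: "e1 \<in> E" "e3 \<in> E" "fst e1 = x1" "fst e3 = x3"
    "u \<in> edge_int (\<gamma> e1)" "u \<in> edge_int (\<gamma> e3)"
    and only: "\<And>e. e \<in> E \<Longrightarrow> u \<in> edge_int (\<gamma> e) \<Longrightarrow> e = e1 \<or> e = e3"
    using crossing_edges[OF op u] by blast
  have two_path: "two_path E \<gamma> u = seg_to (\<gamma> e1) u \<union> seg_to (\<gamma> e3) u"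
    unfolding two_path_def using e only by blast
  obtain h1 where h1: "arc h1" "pathstart h1 = pathstart (\<gamma> e1)" "pathfinish h1 = u"
    "path_image h1 = seg_to (\<gamma> e1) u" "seg_to (\<gamma> e1) u \<subseteq> edge_int (\<gamma> e1) \<union> {pathstart (\<gamma> e1)}"
    by (rule seg_to_arc[OF one_planar_drawingD(2)[OF op e(1)] e(5)])
  obtain h3 where h3: "arc h3" "pathstart h3 = pathstart (\<gamma> e3)" "pathfinish h3 = u"
    "path_image h3 = seg_to (\<gamma> e3) u" "seg_to (\<gamma> e3) u \<subseteq> edge_int (\<gamma> e3) \<union> {pathstart (\<gamma> e3)}"
    by (rule seg_to_arc[OF one_planar_drawingD(2)[OF op e(2)] e(6)])
  have start: "pathstart (\<gamma> e1) = pos x1" "pathstart (\<gamma> e3) = pos x3"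
    using one_planar_drawingD(3)[OF op] e by auto
  have "x1 \<in> X" "x3 \<in> X"
    using e assms(2) by auto
  then have "pos x1 \<notin> path_image (\<gamma> e3)" "pos x3 \<notin> path_image (\<gamma> e1)"
    using black_vertex_on_edge[OF op assms(2,3) e(2) \<open>x1 \<in> X\<close>]
      black_vertex_on_edge[OF op assms(2,3) e(1) \<open>x3 \<in> X\<close>] e(3,4) u(3) by auto
  moreover have "edge_int (\<gamma> e1) \<union> {pos x1} \<subseteq> path_image (\<gamma> e1)"
    "edge_int (\<gamma> e3) \<union> {pos x3} \<subseteq> path_image (\<gamma> e3)"
    using pathstart_in_path_image[of "\<gamma> e1"] pathstart_in_path_image[of "\<gamma> e3"] start
    unfolding edge_int_def by auto
  ultimately have "seg_to (\<gamma> e1) u \<inter> seg_to (\<gamma> e3) u \<subseteq> edge_int (\<gamma> e1) \<inter> edge_int (\<gamma> e3)"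
    using h1(5) h3(5) unfolding start by blast
  then have "path_image h1 \<inter> path_image h3 \<subseteq> edge_int (\<gamma> e1) \<inter> edge_int (\<gamma> e3)"
    unfolding h1(4) h3(4) .
  also have "\<dots> \<subseteq> {u}"
    using one_planar_drawingD(6)[OF op e(1,2)] e u(3) unfolding at_most_one_def by auto
  finally have "arc (h1 +++ reversepath h3)"
    using h1 h3 by (intro arc_join) (auto simp: arc_reversepath)
  moreover have "path_image (h1 +++ reversepath h3) = two_path E \<gamma> u"
    using h1 h3 two_path by (simp add: path_image_join)
  ultimately show ?thesis
    using that h1 h3 start by simp
qed

lemma aux_edgesD:
  assumes "aux_edges X Y E pos \<gamma> \<eta>" "u \<in> crossing_points E \<gamma>"
  shows "arc (\<eta> u)" "{pathstart (\<eta> u), pathfinish (\<eta> u)} = pos ` blacks E \<gamma> u"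
    and "edge_int (\<eta> u) \<inter> drawing_points X Y E pos \<gamma> = {}"
    and "u' \<in> crossing_points E \<gamma> \<Longrightarrow> u' \<noteq> u \<Longrightarrow> edge_int (\<eta> u) \<inter> edge_int (\<eta> u') = {}"
    and "u' \<in> crossing_points E \<gamma> \<Longrightarrow> u' \<noteq> u \<Longrightarrow>
      inside (path_image (\<eta> u) \<union> two_path E \<gamma> u) \<inter> path_image (\<eta> u') = {}"
  using assms unfolding aux_edges_def by blast+

lemma black_points_subset_drawing_points:
  assumes "E \<subseteq> X \<times> Y"
  shows "pos ` blacks E \<gamma> u \<subseteq> drawing_points X Y E pos \<gamma>"
  using blacks_subset[OF assms, of \<gamma> u] unfolding drawing_points_def by blast

lemma aux_edge_Int_drawing_points:
  assumes "aux_edges X Y E pos \<gamma> \<eta>" "u \<in> crossing_points E \<gamma>" "E \<subseteq> X \<times> Y"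
  shows "path_image (\<eta> u) \<inter> drawing_points X Y E pos \<gamma> = pos ` blacks E \<gamma> u"
  using path_image_eq_edge_int_ends[of "\<eta> u"] aux_edgesD(2,3)[OF assms(1,2)]
    black_points_subset_drawing_points[OF assms(3)] by blast

lemma aux_edges_Int:
  assumes aux: "aux_edges X Y E pos \<gamma> \<eta>" and "E \<subseteq> X \<times> Y"
    and u: "u \<in> crossing_points E \<gamma>" "u' \<in> crossing_points E \<gamma>" "u \<noteq> u'"
  shows "path_image (\<eta> u) \<inter> path_image (\<eta> u') = pos ` blacks E \<gamma> u \<inter> pos ` blacks E \<gamma> u'"
proof -
  have image: "path_image (\<eta> v) = edge_int (\<eta> v) \<union> pos ` blacks E \<gamma> v"
    if "v \<in> crossing_points E \<gamma>" for v
    using path_image_eq_edge_int_ends[of "\<eta> v"] aux_edgesD(2)[OF aux that] by simp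
  have "edge_int (\<eta> u) \<inter> pos ` blacks E \<gamma> u' = {}" "pos ` blacks E \<gamma> u \<inter> edge_int (\<eta> u') = {}"
    using aux_edgesD(3)[OF aux u(1)] aux_edgesD(3)[OF aux u(2)]
      black_points_subset_drawing_points[OF assms(2)] by blast+
  moreover have "edge_int (\<eta> u) \<inter> edge_int (\<eta> u') = {}"
    using aux_edgesD(4)[OF aux u(1,2)] u(3) by simp
  ultimately show ?thesis
    unfolding image[OF u(1)] image[OF u(2)] by blast
qed

lemma aux_edge_arc:
  assumes "aux_edges X Y E pos \<gamma> \<eta>" "u \<in> crossing_points E \<gamma>" "blacks E \<gamma> u = {x, x'}"
  obtains c where "arc c" "pathstart c = pos x" "pathfinish c = pos x'" "path_image c = path_image (\<eta> u)"
proof -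
  have "{pathstart (\<eta> u), pathfinish (\<eta> u)} = {pos x, pos x'}"
    using aux_edgesD(2)[OF assms(1,2)] assms(3) by simp
  then show ?thesis
    using arc_reorient[OF aux_edgesD(1)[OF assms(1,2)]] that by blast
qed

lemma aux_cycle_jordan_curve:
  assumes op: "one_planar_drawing X Y E pos \<gamma>" and aux: "aux_edges X Y E pos \<gamma> \<eta>"
    and "E \<subseteq> X \<times> Y" "X \<inter> Y = {}"
    and u: "u \<in> crossing_points E \<gamma>" "blacks E \<gamma> u = {x1, x3}" "x1 \<noteq> x3"
  shows "jordan_curve (path_image (\<eta> u) \<union> two_path E \<gamma> u)"
proof -
  obtain c where c: "arc c" "pathstart c = pos x1" "pathfinish c = pos x3"
    "path_image c = path_image (\<eta> u)"
    using aux_edge_arc[OF aux u(1,2)] .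
  obtain p where p: "arc p" "pathstart p = pos x1" "pathfinish p = pos x3"
    "path_image p = two_path E \<gamma> u"
    using two_path_arc[OF op assms(3,4) u] .
  have "path_image c \<inter> path_image p \<subseteq> path_image (\<eta> u) \<inter> drawing_points X Y E pos \<gamma>"
    using c(4) p(4) two_path_subset_drawing_points by blast
  also have "\<dots> = {pathstart c, pathfinish c}"
    using aux_edge_Int_drawing_points[OF aux u(1) assms(3)] u(2) c(2,3) by simp
  finally show ?thesis
    using jordan_curve_arcs[OF c(1) p(1)] c p by simp
qed

lemma aux_cycle_one_side:
  assumes op: "one_planar_drawing X Y E pos \<gamma>" and aux: "aux_edges X Y E pos \<gamma> \<eta>"
    and "E \<subseteq> X \<times> Y" "X \<inter> Y = {}"
    and u: "u \<in> crossing_points E \<gamma>" "blacks E \<gamma> u = {x1, x3}" "x1 \<noteq> x3"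
    and K: "jordan_curve K" "K \<subseteq> (\<Union>v\<in>crossing_points E \<gamma> - {u}. path_image (\<eta> v))"
  defines "J \<equiv> path_image (\<eta> u) \<union> two_path E \<gamma> u"
  shows "J - K \<subseteq> inside K \<or> J - K \<subseteq> outside K"
proof (rule jordan_curve_Diff_one_side)
  show "jordan_curve J"
    unfolding J_def by (rule aux_cycle_jordan_curve[OF op aux assms(3,4) u])
  show "inside J \<inter> K = {}"
    using aux_edgesD(5)[OF aux u(1)] K(2) unfolding J_def by blast
qed (rule K(1))

lemma crossing_notin_aux_edge:
  assumes op: "one_planar_drawing X Y E pos \<gamma>" and aux: "aux_edges X Y E pos \<gamma> \<eta>"
    and "E \<subseteq> X \<times> Y" "u \<in> crossing_points E \<gamma>" "v \<in> crossing_points E \<gamma>"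
  shows "u \<notin> path_image (\<eta> v)"
proof
  assume "u \<in> path_image (\<eta> v)"
  moreover have "u \<in> drawing_points X Y E pos \<gamma>"
    using assms(4) unfolding crossing_points_def drawing_points_def edge_int_def by blast
  ultimately have "u \<in> pos ` blacks E \<gamma> v"
    using aux_edge_Int_drawing_points[OF aux assms(5,3)] by blast
  then show False
    using crossing_point_not_vertex[OF op assms(4)] blacks_subset[OF assms(3)] by blast
qed

lemma aux_edge_Int_two_path:
  assumes op: "one_planar_drawing X Y E pos \<gamma>" and aux: "aux_edges X Y E pos \<gamma> \<eta>"
    and "E \<subseteq> X \<times> Y" "v \<in> crossing_points E \<gamma>"
  shows "path_image (\<eta> v) \<inter> two_path E \<gamma> u \<subseteq> pos ` blacks E \<gamma> u"
proof
  fix p assume p: "p \<in> path_image (\<eta> v) \<inter> two_path E \<gamma> u"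
  then have "p \<in> pos ` blacks E \<gamma> v"
    using aux_edge_Int_drawing_points[OF aux assms(4,3)] two_path_subset_drawing_points by blast
  then obtain x where "x \<in> X" "p = pos x"
    using blacks_subset[OF assms(3)] by blast
  then show "p \<in> pos ` blacks E \<gamma> u"
    using vertex_on_two_path[OF op, of x] p by blast
qed

lemma two_path_interior_side:
  assumes op: "one_planar_drawing X Y E pos \<gamma>" and "E \<subseteq> X \<times> Y" "X \<inter> Y = {}"
    and u: "u \<in> crossing_points E \<gamma>" "blacks E \<gamma> u = {x1, x3}" "x1 \<noteq> x3"
    and K: "jordan_curve K" "K \<inter> two_path E \<gamma> u \<subseteq> {pos x1, pos x3}"
  shows "u \<in> inside K \<Longrightarrow> two_path E \<gamma> u - {pos x1, pos x3} \<subseteq> inside K"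
    and "u \<notin> inside K \<Longrightarrow> two_path E \<gamma> u - {pos x1, pos x3} \<subseteq> outside K"
proof -
  obtain p where p: "arc p" "pathstart p = pos x1" "pathfinish p = pos x3" "path_image p = two_path E \<gamma> u"
    using two_path_arc[OF op assms(2,3) u] .
  have "connected (two_path E \<gamma> u - {pos x1, pos x3})"
    using connected_simple_path_endless[OF arc_imp_simple_path[OF p(1)]] p(2-4) by simp
  moreover have "u \<in> two_path E \<gamma> u - {pos x1, pos x3}"
    using crossing_in_two_path[OF u(1)] crossing_point_not_vertex[OF op u(1)] blacks_subset[OF assms(2)] u(2)
    by blast
  moreover have "(two_path E \<gamma> u - {pos x1, pos x3}) \<inter> K = {}"
    using K(2) by blast
  ultimately show "u \<in> inside K \<Longrightarrow> two_path E \<gamma> u - {pos x1, pos x3} \<subseteq> inside K"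
    and "u \<notin> inside K \<Longrightarrow> two_path E \<gamma> u - {pos x1, pos x3} \<subseteq> outside K"
    using connected_subset_side[OF K(1)] inside_Un_outside[of K] by blast+
qed

lemma crossing_same_side_as_aux_edge:
  assumes op: "one_planar_drawing X Y E pos \<gamma>" and aux: "aux_edges X Y E pos \<gamma> \<eta>"
    and "E \<subseteq> X \<times> Y" "X \<inter> Y = {}"
    and u: "u \<in> crossing_points E \<gamma>" "blacks E \<gamma> u = {x1, x3}" "x1 \<noteq> x3"
    and K: "jordan_curve K" "K \<subseteq> (\<Union>v\<in>crossing_points E \<gamma> - {u}. path_image (\<eta> v))"
    and r: "r \<in> path_image (\<eta> u) - K"
  shows "u \<in> inside K \<longleftrightarrow> r \<in> inside K"
proof -
  have "u \<notin> K"
    using crossing_notin_aux_edge[OF op aux assms(3) u(1)] K(2) by blast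
  then have "u \<in> path_image (\<eta> u) \<union> two_path E \<gamma> u - K"
    using crossing_in_two_path[OF u(1)] by blast
  then show ?thesis
    using aux_cycle_one_side[OF op aux assms(3,4) u K] r inside_Int_outside[of K] by blast
qed

lemma aux_triangle_theta:
  assumes op: "one_planar_drawing X Y E pos \<gamma>" and aux: "aux_edges X Y E pos \<gamma> \<eta>"
    and EXY: "E \<subseteq> X \<times> Y"
    and W: "w1 \<in> crossing_points E \<gamma>" "w2 \<in> crossing_points E \<gamma>"
      "w \<in> crossing_points E \<gamma>" "w' \<in> crossing_points E \<gamma>"
    and x: "x1 \<noteq> x2" "x2 \<noteq> x3" "x1 \<noteq> x3"
    and blacks: "blacks E \<gamma> w1 = {x1, x2}" "blacks E \<gamma> w2 = {x2, x3}" "blacks E \<gamma> w = {x1, x3}"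
    and "w' \<noteq> w" and blacks': "blacks E \<gamma> w' = {x1, x3}"
  obtains c c' A where "theta (pos x1) (pos x3) c c' A"
    "path_image c = path_image (\<eta> w)" "path_image c' = path_image (\<eta> w')"
    "path_image A = path_image (\<eta> w1) \<union> path_image (\<eta> w2)" "pos x2 \<in> path_image A - {pos x1, pos x3}"
proof -
  have "x1 \<in> X" "x2 \<in> X" "x3 \<in> X"
    using blacks_subset[OF EXY] blacks(1,2) by blast+
  then have pos: "pos x1 \<noteq> pos x2" "pos x2 \<noteq> pos x3" "pos x1 \<noteq> pos x3"
    using inj_onD[OF one_planar_drawingD(1)[OF op]] x by blast+
  have distinct: "w \<noteq> w1" "w \<noteq> w2" "w' \<noteq> w1" "w' \<noteq> w2" "w1 \<noteq> w2"
    using blacks blacks' x by (auto simp: doubleton_eq_iff)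
  have Int: "path_image (\<eta> u) \<inter> path_image (\<eta> v) = pos ` blacks E \<gamma> u \<inter> pos ` blacks E \<gamma> v"
    if "u \<in> crossing_points E \<gamma>" "v \<in> crossing_points E \<gamma>" "u \<noteq> v" for u v
    using aux_edges_Int[OF aux EXY that] .
  have meet: "path_image (\<eta> w) \<inter> path_image (\<eta> w') = {pos x1, pos x3}"
    "path_image (\<eta> w) \<inter> path_image (\<eta> w1) = {pos x1}" "path_image (\<eta> w) \<inter> path_image (\<eta> w2) = {pos x3}"
    "path_image (\<eta> w') \<inter> path_image (\<eta> w1) = {pos x1}" "path_image (\<eta> w') \<inter> path_image (\<eta> w2) = {pos x3}"
    "path_image (\<eta> w1) \<inter> path_image (\<eta> w2) = {pos x2}"
    using Int[OF W(3,4)] \<open>w' \<noteq> w\<close> Int[OF W(3,1) distinct(1)] Int[OF W(3,2) distinct(2)]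
      Int[OF W(4,1) distinct(3)] Int[OF W(4,2) distinct(4)] Int[OF W(1,2) distinct(5)]
    unfolding blacks blacks' using pos by auto
  obtain c where c: "arc c" "pathstart c = pos x1" "pathfinish c = pos x3"
    "path_image c = path_image (\<eta> w)"
    using aux_edge_arc[OF aux W(3) blacks(3)] .
  obtain c' where c': "arc c'" "pathstart c' = pos x1" "pathfinish c' = pos x3"
    "path_image c' = path_image (\<eta> w')"
    using aux_edge_arc[OF aux W(4) blacks'] .
  obtain a1 where a1: "arc a1" "pathstart a1 = pos x1" "pathfinish a1 = pos x2"
    "path_image a1 = path_image (\<eta> w1)"
    using aux_edge_arc[OF aux W(1) blacks(1)] .
  obtain a2 where a2: "arc a2" "pathstart a2 = pos x2" "pathfinish a2 = pos x3"
    "path_image a2 = path_image (\<eta> w2)"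
    using aux_edge_arc[OF aux W(2) blacks(2)] .
  have "arc (a1 +++ a2)"
    using a1 a2 meet(6) by (intro arc_join) auto
  moreover have A: "path_image (a1 +++ a2) = path_image (\<eta> w1) \<union> path_image (\<eta> w2)"
    using a1 a2 by (simp add: path_image_join)
  ultimately have theta: "theta (pos x1) (pos x3) c c' (a1 +++ a2)"
    using c c' a1 a2 meet by unfold_locales (auto simp: Int_Un_distrib)
  have "pos x2 \<in> path_image (\<eta> w1)"
    using meet(6) by blast
  then have "pos x2 \<in> path_image (a1 +++ a2) - {pos x1, pos x3}"
    using pos(1,2) unfolding A by auto
  from that[OF theta c(4) c'(4) A this] show ?thesis .
qed

section \<open>Rerouting a white vertex\<close>

definition redrawn ::
  "'v \<Rightarrow> ('v \<Rightarrow> real \<Rightarrow> complex) \<Rightarrow> ('v \<times> 'v \<Rightarrow> real \<Rightarrow> complex) \<Rightarrow> 'v \<times> 'v \<Rightarrow> real \<Rightarrow> complex" where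
  "redrawn y \<rho> \<gamma> e = (if snd e = y then \<rho> (fst e) else \<gamma> e)"

context
  fixes X Y :: "'v set" and E :: "('v \<times> 'v) set" and pos :: "'v \<Rightarrow> complex"
    and \<gamma> :: "'v \<times> 'v \<Rightarrow> real \<Rightarrow> complex" and \<rho> :: "'v \<Rightarrow> real \<Rightarrow> complex"
    and y :: 'v and r :: complex
  assumes op: "one_planar_drawing X Y E pos \<gamma>" and EXY: "E \<subseteq> X \<times> Y" and XY: "X \<inter> Y = {}"
    and y: "y \<in> Y" and r: "r \<notin> drawing_points X Y E pos \<gamma>"
    and route: "\<And>e. e \<in> E \<Longrightarrow> snd e = y \<Longrightarrow>
      arc (\<rho> (fst e)) \<and> pathstart (\<rho> (fst e)) = pos (fst e) \<and> pathfinish (\<rho> (fst e)) = r"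
    and route_avoids: "\<And>e. e \<in> E \<Longrightarrow> snd e = y \<Longrightarrow>
      edge_int (\<rho> (fst e)) \<inter> drawing_points X Y E pos \<gamma> = {}"
    and routes_disjoint: "\<And>e f. e \<in> E \<Longrightarrow> f \<in> E \<Longrightarrow> snd e = y \<Longrightarrow> snd f = y \<Longrightarrow>
      fst e \<noteq> fst f \<Longrightarrow> edge_int (\<rho> (fst e)) \<inter> edge_int (\<rho> (fst f)) = {}"
begin

lemma edge_int_redrawn_Int:
  assumes "e \<in> E" "f \<in> E" "e \<noteq> f"
  shows "edge_int (redrawn y \<rho> \<gamma> e) \<inter> edge_int (redrawn y \<rho> \<gamma> f) =
    (if snd e = y \<or> snd f = y then {} else edge_int (\<gamma> e) \<inter> edge_int (\<gamma> f))"
proof -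
  have old: "edge_int (\<gamma> g) \<subseteq> drawing_points X Y E pos \<gamma>" if "g \<in> E" for g
    using that unfolding drawing_points_def edge_int_def by blast
  have "fst e \<noteq> fst f" if "snd e = y" "snd f = y"
    using assms(3) that prod_eqI by metis
  then consider "snd e = y" "snd f = y" "fst e \<noteq> fst f" | "snd e = y" "snd f \<noteq> y"
    | "snd e \<noteq> y" "snd f = y" | "snd e \<noteq> y" "snd f \<noteq> y"
    by blast
  then show ?thesis
  proof cases
    case 1
    then show ?thesis
      using routes_disjoint[OF assms(1,2)] by (simp add: redrawn_def)
  next
    case 2
    then show ?thesis
      using route_avoids[OF assms(1)] old[OF assms(2)] by (simp add: redrawn_def) blast
  next
    case 3
    then show ?thesis
      using route_avoids[OF assms(2)] old[OF assms(1)] by (simp add: redrawn_def) blast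
  qed (simp add: redrawn_def)
qed

lemma redrawn_vertex_on_edge:
  assumes e: "e \<in> E" and v: "v \<in> X \<union> Y" and on: "(pos(y := r)) v \<in> path_image (redrawn y \<rho> \<gamma> e)"
  shows "v = fst e \<or> v = snd e"
proof (cases "snd e = y")
  case True
  show ?thesis
  proof (cases "v = y")
    case False
    have "pos v \<in> drawing_points X Y E pos \<gamma>"
      using v unfolding drawing_points_def by blast
    then have "pos v \<notin> edge_int (\<rho> (fst e))" "pos v \<noteq> r"
      using route_avoids[OF e True] r by auto
    moreover have "pos v \<in> path_image (\<rho> (fst e))"
      using on False True by (simp add: redrawn_def)
    ultimately have "pos v = pos (fst e)"
      using path_image_eq_edge_int_ends[of "\<rho> (fst e)"] route[OF e True] by auto
    moreover have "fst e \<in> X \<union> Y"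
      using e EXY by auto
    ultimately show ?thesis
      using inj_onD[OF one_planar_drawingD(1)[OF op]] v by blast
  qed (use True in simp)
next
  case False
  have "path_image (\<gamma> e) \<subseteq> drawing_points X Y E pos \<gamma>"
    using e unfolding drawing_points_def by blast
  then have "v \<noteq> y"
    using on False r by (auto simp: redrawn_def)
  then show ?thesis
    using on False one_planar_drawingD(5)[OF op e v] by (simp add: redrawn_def)
qed

lemma redrawn_one_planar: "one_planar_drawing X Y E (pos(y := r)) (redrawn y \<rho> \<gamma>)"
  unfolding one_planar_drawing_def drawing_def
proof (intro conjI ballI impI)
  have "r \<noteq> pos v" if "v \<in> X \<union> Y" for v
    using r that unfolding drawing_points_def by blast
  then show "inj_on (pos(y := r)) (X \<union> Y)"
    using one_planar_drawingD(1)[OF op] unfolding inj_on_def by auto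
next
  fix e assume e: "e \<in> E"
  then have "fst e \<noteq> y"
    using subsetD[OF EXY e] XY y by (auto simp: mem_Times_iff)
  then show "arc (redrawn y \<rho> \<gamma> e)" "pathstart (redrawn y \<rho> \<gamma> e) = (pos(y := r)) (fst e)"
    "pathfinish (redrawn y \<rho> \<gamma> e) = (pos(y := r)) (snd e)"
    using route[OF e] one_planar_drawingD(2-4)[OF op e] unfolding redrawn_def by auto
  show "v = fst e \<or> v = snd e" if "v \<in> X \<union> Y" "(pos(y := r)) v \<in> path_image (redrawn y \<rho> \<gamma> e)" for v
    using redrawn_vertex_on_edge[OF e that] .
  have "crossings_on E (redrawn y \<rho> \<gamma>) e \<subseteq> crossings_on E \<gamma> e"
  proof
    fix z assume "z \<in> crossings_on E (redrawn y \<rho> \<gamma>) e"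
    then obtain f p where "z = (f, p)" "f \<in> E" "f \<noteq> e"
      "p \<in> edge_int (redrawn y \<rho> \<gamma> e) \<inter> edge_int (redrawn y \<rho> \<gamma> f)"
      unfolding crossings_on_def by blast
    then show "z \<in> crossings_on E \<gamma> e"
      using edge_int_redrawn_Int[OF e, of f] unfolding crossings_on_def by (auto split: if_splits)
  qed
  then show "at_most_one (crossings_on E (redrawn y \<rho> \<gamma>) e)"
    using one_planar_drawingD(8)[OF op e] at_most_one_subset by blast
next
  fix e f assume ef: "e \<in> E" "f \<in> E"
  show "at_most_one (edge_int (redrawn y \<rho> \<gamma> e) \<inter> edge_int (redrawn y \<rho> \<gamma> f))" if "e \<noteq> f"
    using edge_int_redrawn_Int[OF ef that] one_planar_drawingD(6)[OF op ef that]
    by (simp add: at_most_one_def)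
  show "edge_int (redrawn y \<rho> \<gamma> e) \<inter> edge_int (redrawn y \<rho> \<gamma> f) = {}"
    if "e \<noteq> f \<and> {fst e, snd e} \<inter> {fst f, snd f} \<noteq> {}"
    using edge_int_redrawn_Int[OF ef] one_planar_drawingD(7)[OF op ef] that by simp
qed

lemma crossing_points_redrawn:
  "crossing_points E (redrawn y \<rho> \<gamma>) \<subseteq> crossing_points (E - {e. snd e = y}) \<gamma>"
proof
  fix p assume "p \<in> crossing_points E (redrawn y \<rho> \<gamma>)"
  then obtain e f where "e \<in> E" "f \<in> E" "e \<noteq> f"
    "p \<in> edge_int (redrawn y \<rho> \<gamma> e) \<inter> edge_int (redrawn y \<rho> \<gamma> f)"
    unfolding crossing_points_def by blast
  then show "p \<in> crossing_points (E - {e. snd e = y}) \<gamma>"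
    using edge_int_redrawn_Int[of e f] unfolding crossing_points_def by (auto split: if_splits)
qed

end

text \<open>A crossing on an edge at y is no crossing between two edges avoiding y, since in a 1-planar
  drawing both would have to cross that edge at the same point.\<close>
lemma card_crossing_points_avoiding_vertex:
  assumes op: "one_planar_drawing X Y E pos \<gamma>" and "finite E"
    and e0: "e0 \<in> E" "snd e0 = y" and e1: "e1 \<in> E" "e1 \<noteq> e0"
    and u: "u \<in> edge_int (\<gamma> e0) \<inter> edge_int (\<gamma> e1)"
  shows "card (crossing_points (E - {e. snd e = y}) \<gamma>) < card (crossing_points E \<gamma>)"
proof -
  have "crossing_points (E - {e. snd e = y}) \<gamma> \<subseteq> crossing_points E \<gamma> - {u}"
  proof
    fix p assume "p \<in> crossing_points (E - {e. snd e = y}) \<gamma>"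
    then obtain e f where ef: "e \<in> E" "f \<in> E" "snd e \<noteq> y" "snd f \<noteq> y" "e \<noteq> f"
      "p \<in> edge_int (\<gamma> e) \<inter> edge_int (\<gamma> f)"
      unfolding crossing_points_def by blast
    have "p \<noteq> u"
    proof
      assume "p = u"
      then have "e = f"
        using crossing_edge_unique[OF op e0(1) ef(1,2)] ef(3,4,6) e0(2) u by auto
      then show False
        using ef(5) by contradiction
    qed
    then show "p \<in> crossing_points E \<gamma> - {u}"
      using ef unfolding crossing_points_def by blast
  qed
  moreover have "u \<in> crossing_points E \<gamma>"
    using e0 e1 u unfolding crossing_points_def by blast
  ultimately show ?thesis
    using psubset_card_mono[OF finite_crossing_points[OF assms(2) op]] by blast
qed

text \<open>The vertex y is moved to the midpoint of g and joined to its neighbours along the two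
  halves of g.\<close>
lemma reroute_white_vertex:
  assumes op: "one_planar_drawing X Y E pos \<gamma>" and "finite E" "E \<subseteq> X \<times> Y" "X \<inter> Y = {}"
    and "y \<in> Y" "x1 \<noteq> x3" and nbrs: "\<And>e. e \<in> E \<Longrightarrow> snd e = y \<Longrightarrow> fst e = x1 \<or> fst e = x3"
    and g: "arc g" "pathstart g = pos x1" "pathfinish g = pos x3"
      "edge_int g \<inter> drawing_points X Y E pos \<gamma> = {}"
    and crossed: "e0 \<in> E" "snd e0 = y" "e1 \<in> E" "e1 \<noteq> e0" "u \<in> edge_int (\<gamma> e0) \<inter> edge_int (\<gamma> e1)"
  obtains pos' \<gamma>' where "one_planar_drawing X Y E pos' \<gamma>'"
    "card (crossing_points E \<gamma>') < card (crossing_points E \<gamma>)"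
proof -
  obtain r h1 h3 where h: "r \<in> edge_int g"
    "arc h1" "pathstart h1 = pos x1" "pathfinish h1 = r"
    "arc h3" "pathstart h3 = pos x3" "pathfinish h3 = r"
    "edge_int h1 \<union> edge_int h3 \<subseteq> edge_int g" "edge_int h1 \<inter> edge_int h3 = {}"
    using arc_halves[OF g(1)] g(2,3) by metis
  define \<rho> where "\<rho> x = (if x = x1 then h1 else h3)" for x
  have route: "arc (\<rho> (fst e)) \<and> pathstart (\<rho> (fst e)) = pos (fst e) \<and> pathfinish (\<rho> (fst e)) = r"
    and route_avoids: "edge_int (\<rho> (fst e)) \<inter> drawing_points X Y E pos \<gamma> = {}"
    if "e \<in> E" "snd e = y" for e
    using nbrs[OF that] h g(4) \<open>x1 \<noteq> x3\<close> unfolding \<rho>_def by auto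
  have routes_disjoint: "edge_int (\<rho> (fst e)) \<inter> edge_int (\<rho> (fst f)) = {}"
    if "e \<in> E" "f \<in> E" "snd e = y" "snd f = y" "fst e \<noteq> fst f" for e f
    using nbrs[OF that(1,3)] nbrs[OF that(2,4)] that(5) h(9) unfolding \<rho>_def by (auto simp: Int_commute)
  have "r \<notin> drawing_points X Y E pos \<gamma>"
    using h(1) g(4) by blast
  note redrawn = assms(1,3-5) this route route_avoids routes_disjoint
  show ?thesis
  proof (rule that)
    show "one_planar_drawing X Y E (pos(y := r)) (redrawn y \<rho> \<gamma>)"
      by (rule redrawn_one_planar[OF redrawn])
    have "finite (crossing_points (E - {e. snd e = y}) \<gamma>)"
      using finite_crossing_points[OF assms(2) op]
      by (rule finite_subset[rotated]) (unfold crossing_points_def, blast)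
    then have "card (crossing_points E (redrawn y \<rho> \<gamma>)) \<le> card (crossing_points (E - {e. snd e = y}) \<gamma>)"
      using crossing_points_redrawn[OF redrawn] by (rule card_mono)
    also have "\<dots> < card (crossing_points E \<gamma>)"
      by (rule card_crossing_points_avoiding_vertex[OF op assms(2) crossed])
    finally show "card (crossing_points E (redrawn y \<rho> \<gamma>)) < card (crossing_points E \<gamma>)" .
  qed
qed

text \<open>An edge avoiding x1 and x3 cannot meet J, so it would lead from the white vertex to a black
  vertex on the same side of J.\<close>
lemma white_vertex_neighbours_on_curve:
  assumes op: "one_planar_drawing X Y E pos \<gamma>" and "E \<subseteq> X \<times> Y" "X \<inter> Y = {}"
    and J: "jordan_curve J" "J \<inter> drawing_points X Y E pos \<gamma> \<subseteq> {pos x1, pos x3}"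
    and x13: "x1 \<in> X" "x3 \<in> X"
    and K: "K = inside J \<or> K = outside J" "\<forall>x\<in>X. pos x \<notin> K"
    and f: "f \<in> E" "pos (snd f) \<in> K"
  shows "fst f = x1 \<or> fst f = x3"
proof (rule ccontr)
  assume "\<not> ?thesis"
  then have "pos x1 \<notin> path_image (\<gamma> f)" "pos x3 \<notin> path_image (\<gamma> f)"
    using black_vertex_on_edge[OF op assms(2,3) f(1) x13(1)]
      black_vertex_on_edge[OF op assms(2,3) f(1) x13(2)] by blast+
  moreover have "path_image (\<gamma> f) \<subseteq> drawing_points X Y E pos \<gamma>"
    using f(1) unfolding drawing_points_def by blast
  ultimately have "path_image (\<gamma> f) \<inter> J = {}"
    using J(2) by blast
  moreover have "pos (snd f) \<in> path_image (\<gamma> f)"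
    using pathfinish_in_path_image[of "\<gamma> f"] one_planar_drawingD(4)[OF op f(1)] by simp
  ultimately have "path_image (\<gamma> f) \<subseteq> K"
    using connected_subset_side[OF J(1) connected_path_image[OF arc_imp_path[OF
        one_planar_drawingD(2)[OF op f(1)]]] _ K(1) _ f(2)] by blast
  moreover have "pos (fst f) \<in> path_image (\<gamma> f)"
    using pathstart_in_path_image[of "\<gamma> f"] one_planar_drawingD(3)[OF op f(1)] by simp
  moreover have "fst f \<in> X"
    using f(1) assms(2) by auto
  ultimately show False
    using K(2) by blast
qed

text \<open>Otherwise the edge at x1 through u leads into a side of J without black vertices, so its
  white end could be rerouted along g.\<close>
lemma crossing_side_contains_black:
  assumes min: "min_crossing_one_planar_drawing X Y E pos \<gamma>" and "finite E" "E \<subseteq> X \<times> Y" "X \<inter> Y = {}"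
    and u: "u \<in> crossing_points E \<gamma>" "blacks E \<gamma> u = {x1, x3}" "x1 \<noteq> x3"
    and J: "jordan_curve J" "J \<inter> drawing_points X Y E pos \<gamma> \<subseteq> {pos x1, pos x3}"
    and g: "arc g" "pathstart g = pos x1" "pathfinish g = pos x3" "path_image g \<subseteq> J"
    and K: "K = inside J \<or> K = outside J" "u \<in> K"
  shows "\<exists>x\<in>X. pos x \<in> K"
proof (rule ccontr)
  assume no_black: "\<not> (\<exists>x\<in>X. pos x \<in> K)"
  have op: "one_planar_drawing X Y E pos \<gamma>"
    using min unfolding min_crossing_one_planar_drawing_def by blast
  obtain e1 e3 where e: "e1 \<in> E" "e3 \<in> E" "fst e1 = x1" "fst e3 = x3"
    "u \<in> edge_int (\<gamma> e1)" "u \<in> edge_int (\<gamma> e3)"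
    using crossing_edges[OF op u] by blast
  have x13: "x1 \<in> X" "x3 \<in> X"
    using e assms(3) by auto
  define y where "y = snd e1"
  have "y \<in> Y"
    using e(1) assms(3) unfolding y_def by auto
  have ends: "pathstart (\<gamma> e1) = pos x1" "pathfinish (\<gamma> e1) = pos y"
    using one_planar_drawingD(3,4)[OF op e(1)] e(3) unfolding y_def by simp_all
  have "path_image (\<gamma> e1) \<subseteq> drawing_points X Y E pos \<gamma>"
    using e(1) unfolding drawing_points_def by blast
  moreover have "pos x3 \<notin> path_image (\<gamma> e1)"
    using black_vertex_on_edge[OF op assms(3,4) e(1) x13(2)] e(3) u(3) by auto
  ultimately have "(path_image (\<gamma> e1) - {pos x1}) \<inter> J = {}"
    using J(2) by blast
  moreover have "u \<in> path_image (\<gamma> e1) - {pos x1}"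
    using e(5) ends unfolding edge_int_def by auto
  ultimately have tail: "path_image (\<gamma> e1) - {pos x1} \<subseteq> K"
    using connected_subset_side[OF J(1) connected_arc_image_Diff_start[OF
        one_planar_drawingD(2)[OF op e(1)]], unfolded ends] K by blast
  have "pos y \<noteq> pos x1"
    using arc_distinct_ends[OF one_planar_drawingD(2)[OF op e(1)]] ends by simp
  then have "pos y \<in> K"
    using tail pathfinish_in_path_image[of "\<gamma> e1"] ends by auto
  then have nbrs: "fst f = x1 \<or> fst f = x3" if "f \<in> E" "snd f = y" for f
    using white_vertex_neighbours_on_curve[OF op assms(3,4) J x13 K(1) _ that(1)] no_black that(2)
    by blast
  have "edge_int g \<subseteq> J - {pos x1, pos x3}"
    using g(2-4) unfolding edge_int_def by auto
  then have g_avoids: "edge_int g \<inter> drawing_points X Y E pos \<gamma> = {}"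
    using J(2) by blast
  have "snd e1 = y" "e3 \<noteq> e1"
    using e u(3) unfolding y_def by auto
  obtain pos' \<gamma>' where "one_planar_drawing X Y E pos' \<gamma>'"
      "card (crossing_points E \<gamma>') < card (crossing_points E \<gamma>)"
    by (rule reroute_white_vertex[OF op assms(2-4) \<open>y \<in> Y\<close> u(3) nbrs g(1-3) g_avoids
          e(1) \<open>snd e1 = y\<close> e(2) \<open>e3 \<noteq> e1\<close> IntI[OF e(5,6)]])
  then show False
    using min unfolding min_crossing_one_planar_drawing_def by (meson not_le)
qed

lemma crossing_same_side_as_black:
  assumes min: "min_crossing_one_planar_drawing X Y E pos \<gamma>" and "finite E" "E \<subseteq> X \<times> Y" "X \<inter> Y = {}"
    and aux: "aux_edges X Y E pos \<gamma> \<eta>" and "no_separating_2cycle X E pos \<gamma> \<eta>"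
    and W: "w \<in> crossing_points E \<gamma>" "w' \<in> crossing_points E \<gamma>" "w' \<noteq> w"
    and blacks: "blacks E \<gamma> w = {x1, x3}" "blacks E \<gamma> w' = {x1, x3}" "x1 \<noteq> x3"
    and x: "x \<in> X" "pos x \<notin> path_image (\<eta> w) \<union> path_image (\<eta> w')"
  shows "w \<in> inside (path_image (\<eta> w) \<union> path_image (\<eta> w')) \<longleftrightarrow>
    pos x \<in> inside (path_image (\<eta> w) \<union> path_image (\<eta> w'))"
proof -
  let ?D = "path_image (\<eta> w) \<union> path_image (\<eta> w')"
  have op: "one_planar_drawing X Y E pos \<gamma>"
    using min unfolding min_crossing_one_planar_drawing_def by blast
  obtain c where c: "arc c" "pathstart c = pos x1" "pathfinish c = pos x3"
    "path_image c = path_image (\<eta> w)"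
    using aux_edge_arc[OF aux W(1) blacks(1)] .
  obtain c' where c': "arc c'" "pathstart c' = pos x1" "pathfinish c' = pos x3"
    "path_image c' = path_image (\<eta> w')"
    using aux_edge_arc[OF aux W(2) blacks(2)] .
  have "path_image c \<inter> path_image c' = {pathstart c, pathfinish c}"
    using aux_edges_Int[OF aux assms(3) W(1,2)] W(3) blacks c c' by auto
  then have D: "jordan_curve ?D"
    using jordan_curve_arcs[OF c(1) c'(1)] c c' by simp
  have "?D \<inter> drawing_points X Y E pos \<gamma> \<subseteq> {pos x1, pos x3}"
    using aux_edge_Int_drawing_points[OF aux W(1) assms(3)] aux_edge_Int_drawing_points[OF aux W(2) assms(3)]
      blacks by auto
  then have "\<exists>x\<in>X. pos x \<in> K" if "K = inside ?D \<or> K = outside ?D" "w \<in> K" for K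
    using crossing_side_contains_black[OF min assms(2-4) W(1) blacks(1,3) D _ c(1-3) _ that] c(4) by blast
  moreover have "\<not> ((\<exists>x\<in>X. pos x \<in> inside ?D) \<and> (\<exists>x\<in>X. pos x \<in> outside ?D))"
    using assms(6)[unfolded no_separating_2cycle_def, rule_format, OF W(1,2)] W(3) blacks by auto
  moreover have "w \<notin> ?D"
    using crossing_notin_aux_edge[OF op aux assms(3) W(1)] W by blast
  ultimately show ?thesis
    using x inside_Un_outside[of ?D] by blast
qed

lemma crossings_on_opposite_sides:
  assumes min: "min_crossing_one_planar_drawing X Y E pos \<gamma>" and "finite E" "E \<subseteq> X \<times> Y" "X \<inter> Y = {}"
    and aux: "aux_edges X Y E pos \<gamma> \<eta>" and "no_separating_2cycle X E pos \<gamma> \<eta>"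
    and W: "w1 \<in> crossing_points E \<gamma>" "w2 \<in> crossing_points E \<gamma>"
      "w \<in> crossing_points E \<gamma>" "w' \<in> crossing_points E \<gamma>"
    and distinct: "w1 \<noteq> w" "w2 \<noteq> w" "w1 \<noteq> w'" "w2 \<noteq> w'" "w' \<noteq> w"
    and blacks: "blacks E \<gamma> w = {x1, x3}" "blacks E \<gamma> w' = {x1, x3}" "x1 \<noteq> x3"
    and "theta (pos x1) (pos x3) c c' A"
    and img: "path_image c = path_image (\<eta> w)" "path_image c' = path_image (\<eta> w')"
      "path_image A = path_image (\<eta> w1) \<union> path_image (\<eta> w2)"
    and x2: "x2 \<in> X" "pos x2 \<in> path_image A - {pos x1, pos x3}"
  shows "w \<in> inside (path_image c \<union> path_image A) \<longleftrightarrow> w' \<notin> inside (path_image c \<union> path_image A)"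
proof (rule ccontr)
  interpret theta "pos x1" "pos x3" c c' A
    by fact
  have op: "one_planar_drawing X Y E pos \<gamma>"
    using min unfolding min_crossing_one_planar_drawing_def by blast
  assume "\<not> ?thesis"
  then have same: "w \<in> inside (T1 \<union> T3) \<longleftrightarrow> w' \<in> inside (T1 \<union> T3)"
    by blast
  have others: "T2 \<union> T3 \<subseteq> (\<Union>v\<in>crossing_points E \<gamma> - {w}. path_image (\<eta> v))"
    "T1 \<union> T3 \<subseteq> (\<Union>v\<in>crossing_points E \<gamma> - {w'}. path_image (\<eta> v))"
    using img W distinct by auto
  obtain r r' where r: "r \<in> T1 - {pos x1, pos x3}" "r' \<in> T2 - {pos x1, pos x3}"
    using arc_interior_nonempty by blast
  have "w \<in> inside (T2 \<union> T3) \<longleftrightarrow> r \<in> inside (T2 \<union> T3)"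
    by (rule crossing_same_side_as_aux_edge[OF op aux assms(3,4) W(3) blacks(1,3)
        jordan_curve_cycles(3) others(1)]) (use r(1) meet img in blast)
  moreover have "w' \<in> inside (T1 \<union> T3) \<longleftrightarrow> r' \<in> inside (T1 \<union> T3)"
    by (rule crossing_same_side_as_aux_edge[OF op aux assms(3,4) W(4) blacks(2,3)
        jordan_curve_cycles(2) others(2)]) (use r(2) meet img in blast)
  moreover have "w \<notin> T1 \<union> T2 \<union> T3"
    using crossing_notin_aux_edge[OF op aux assms(3) W(3)] W unfolding img by blast
  ultimately have "w \<in> inside (T1 \<union> T2) \<longleftrightarrow> pos x2 \<notin> inside (T1 \<union> T2)"
    using opposite_side_of_cycle12[OF _ r x2(2)] same by blast
  moreover have "w \<in> inside (T1 \<union> T2) \<longleftrightarrow> pos x2 \<in> inside (T1 \<union> T2)"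
    using crossing_same_side_as_black[OF min assms(2-6) W(3,4) distinct(5) blacks x2(1)] x2(2) meet
    unfolding img by blast
  ultimately show False
    by blast
qed

theorem proposition4:
  fixes X Y :: "'v set" and E :: "('v \<times> 'v) set"
    and pos :: "'v \<Rightarrow> complex" and \<gamma> :: "'v \<times> 'v \<Rightarrow> real \<Rightarrow> complex"
    and \<eta> :: "complex \<Rightarrow> real \<Rightarrow> complex"
    and w1 w2 w w' :: complex and x1 x2 x3 :: 'v
  assumes "finite X" "finite Y" "X \<inter> Y = {}" "E \<subseteq> X \<times> Y"
    and "3 \<le> card X" "card X \<le> card Y"
    and "min_crossing_one_planar_drawing X Y E pos \<gamma>"
    and "aux_edges X Y E pos \<gamma> \<eta>"
    and "no_separating_2cycle X E pos \<gamma> \<eta>"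
    and "w1 \<in> crossing_points E \<gamma>" "w2 \<in> crossing_points E \<gamma>"
    and "w \<in> crossing_points E \<gamma>" "w' \<in> crossing_points E \<gamma>"
    and "x1 \<noteq> x2" "x2 \<noteq> x3" "x1 \<noteq> x3"
    and "blacks E \<gamma> w1 = {x1, x2}" "blacks E \<gamma> w2 = {x2, x3}" "blacks E \<gamma> w = {x1, x3}"
    and "w' \<noteq> w" "blacks E \<gamma> w' = {x1, x3}"
  shows "let C = path_image (\<eta> w1) \<union> path_image (\<eta> w2) \<union> path_image (\<eta> w);
             P = two_path E \<gamma> w - {pos x1, pos x3};
             P' = two_path E \<gamma> w' - {pos x1, pos x3}
         in (P \<subseteq> inside C \<and> P' \<subseteq> outside C) \<or> (P' \<subseteq> inside C \<and> P \<subseteq> outside C)"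
proof -
  note EXY = assms(4) and aux = assms(8) and W = assms(10-13) and blacks = assms(19,21)
  have op: "one_planar_drawing X Y E pos \<gamma>"
    using assms(7) unfolding min_crossing_one_planar_drawing_def by blast
  have "finite E"
    using finite_subset[OF EXY finite_cartesian_product[OF assms(1,2)]] .
  moreover have "x2 \<in> X"
    using blacks_subset[OF EXY] assms(17) by blast
  moreover have "w1 \<noteq> w" "w2 \<noteq> w" "w1 \<noteq> w'" "w2 \<noteq> w'"
    using assms(14-19,21) by (auto simp: doubleton_eq_iff)
  moreover obtain c c' A where "theta (pos x1) (pos x3) c c' A" and img: "path_image c = path_image (\<eta> w)"
    "path_image c' = path_image (\<eta> w')" "path_image A = path_image (\<eta> w1) \<union> path_image (\<eta> w2)"
    and "pos x2 \<in> path_image A - {pos x1, pos x3}"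
    by (rule aux_triangle_theta[OF op aux EXY W assms(14-21)])
  ultimately have sep: "w \<in> inside (path_image c \<union> path_image A) \<longleftrightarrow> w' \<notin> inside (path_image c \<union> path_image A)"
    using crossings_on_opposite_sides[OF assms(7) _ EXY assms(3,8,9) W _ _ _ _ assms(20) blacks assms(16)] by blast
  have C: "jordan_curve (path_image c \<union> path_image A)"
    using theta.jordan_curve_cycles(2)[OF \<open>theta _ _ c c' A\<close>] .
  have "path_image (\<eta> v) \<inter> two_path E \<gamma> u \<subseteq> {pos x1, pos x3}"
    if "v \<in> crossing_points E \<gamma>" "u \<in> {w, w'}" for u v
    using aux_edge_Int_two_path[OF op aux EXY that(1), of u] that(2) blacks by auto
  then have "(path_image c \<union> path_image A) \<inter> two_path E \<gamma> w \<subseteq> {pos x1, pos x3}"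
    "(path_image c \<union> path_image A) \<inter> two_path E \<gamma> w' \<subseteq> {pos x1, pos x3}"
    unfolding img using W by blast+
  note sides = two_path_interior_side[OF op EXY assms(3) W(3) blacks(1) assms(16) C this(1)]
    two_path_interior_side[OF op EXY assms(3) W(4) blacks(2) assms(16) C this(2)]
  have "path_image (\<eta> w1) \<union> path_image (\<eta> w2) \<union> path_image (\<eta> w) = path_image c \<union> path_image A"
    using img by auto
  then show ?thesis
    using sep sides unfolding Let_def by auto
qed

end
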